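(* Let $T$ be a reasonable test. Then for every $\vec f=(f,g)\in F\times F$, every $\epsilon\in(\frac12,1)$ and every measurable $A\subseteq\Omega^\infty$: if $f(A\cap R^{\vec f}_{T,\epsilon})>0$ then $g(A\cap R^{\vec f}_{T,\epsilon})>0$. Similarly, for every $\epsilon\in(0,\frac12)$: if $g(A\cap L^{\vec f}_{T,\epsilon})>0$ then $f(A\cap L^{\vec f}_{T,\epsilon})>0$.
   Context: Let $\Omega=\{0,1\}$, $\Omega^\infty$ the set of infinite sequences $\omega=(\omega_1,\omega_2,\dots)$, and $\omega^t=(\omega_1,\dots,\omega_t)$ (also used for the cylinder set of all sequences with this prefix; $\omega^0=\emptyset$). $\mathcal G_t$ is the $\sigma$-algebra generated by the length-$t$ cylinders and $\mathcal G_\infty$ the $\sigma$-algebra generated by all cylinders. $\Delta(\Omega)$ is the set of probability distributions on $\Omega$; for $p\in\Delta(\Omega)$ and $x\in\Omega$, $p[x]$ is the probability of $x$. A forecasting strategy is a map $f:\bigcup_{t\ge0}(\Omega\times\Delta(\Omega)\times\Delta(\Omega))^t\to\Delta(\Omega)$; $F$ is the set of all forecasting strategies. Given an ordered pair $\vec f=(f,g)\in F\times F$ and $\omega\in\Omega^\infty$, the play path $(\omega,\vec f)$ is defined recursively: $(\omega,\vec f)^0=\emptyset$ and its $t$-th entry is $(\omega_t,f((\omega,\vec f)^{t-1}),g((\omega,\vec f)^{t-1}))$. The pair $\vec f$ induces two probability measures on $(\Omega^\infty,\mathcal G_\infty)$, again denoted $f$ and $g$, determined by $f(\omega^t)=\prod_{n=1}^t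 f((\omega,\vec f)^{n-1})[\omega_n]$ and $g(\omega^t)=\prod_{n=1}^t g((\omega,\vec f)^{n-1})[\omega_n]$. A (cardinal comparison) test is a sequence $T=(T_t)_{t>0}$ of $\mathcal G_t$-measurable functions $T_t:(\Omega\times\Delta(\Omega)\times\Delta(\Omega))^\infty\to[0,1]$; write $T_t(\omega,\vec f)=T_t((\omega,\vec f))$ and $T(\omega,\vec f)=\lim_t T_t(\omega,\vec f)$ whenever the limit exists. For $\epsilon\in(0,1)$ let $L^{\vec f}_{T,\epsilon}=\{\omega:T(\omega,\vec f)\text{ exists and }>\epsilon\}$ and $R^{\vec f}_{T,\epsilon}=\{\omega:T(\omega,\vec f)\text{ exists and }<\epsilon\}$. $T$ is reasonable if for all $\vec f=(f,g)$ and measurable $A$: for $\epsilon\in(0,\frac12)$, if $g(A)>0$ and $f(A)<\frac{\epsilon}{1-\epsilon}g(A)$ then $g(A\cap R^{\vec f}_{T,\epsilon})>0$; and for $\epsilon\in(\frac12,1)$, if $f(A)>0$ and $g(A)<\frac{1-\epsilon}{\epsilon}f(A)$ then $f(A\cap L^{\vec f}_{T,\epsilon})>0$. *)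

theory Defs
  imports "HOL-Probability.Probability"
begin

text \<open>Outcomes: Omega = {0,1} rendered as bool.  Infinite sequences are nat => bool,
  where index n corresponds to the (n+1)-th coordinate of the paper.
  Delta(Omega) is rendered as bool pmf; p[x] is pmf p x.\<close>

type_synonym outcome = bool
type_synonym forecast = "bool pmf"
type_synonym entry = "outcome \<times> forecast \<times> forecast"
type_synonym strategy = "entry list \<Rightarrow> forecast"

fun play_hist :: "(nat \<Rightarrow> outcome) \<Rightarrow> strategy \<Rightarrow> strategy \<Rightarrow> nat \<Rightarrow> entry list" where
  "play_hist \<omega> f g 0 = []"
| "play_hist \<omega> f g (Suc n) =
     play_hist \<omega> f g n @ [(\<omega> n, f (play_hist \<omega> f g n), g (play_hist \<omega> f g n))]"

text \<open>The infinite play path; entry n is the (n+1)-th entry of the paper.\<close>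
definition play_path :: "(nat \<Rightarrow> outcome) \<Rightarrow> strategy \<Rightarrow> strategy \<Rightarrow> nat \<Rightarrow> entry" where
  "play_path \<omega> f g n = (\<omega> n, f (play_hist \<omega> f g n), g (play_hist \<omega> f g n))"

text \<open>The measurable space (Omega^infinity, G_infinity): sigma-algebra generated by cylinders
  = product sigma-algebra of discrete spaces.\<close>
definition seq_space :: "(nat \<Rightarrow> outcome) measure" where
  "seq_space = PiM UNIV (\<lambda>_. count_space UNIV)"

definition cyl :: "(nat \<Rightarrow> outcome) \<Rightarrow> nat \<Rightarrow> (nat \<Rightarrow> outcome) set" where
  "cyl \<omega> t = {\<omega>'. \<forall>n<t. \<omega>' n = \<omega> n}"

text \<open>M is the probability measure induced by the pair (f,g) via the component
  h (h = fst for f, h = snd for g): M(omega^t) = prod_{n<t} h(forecasts at n)[omega_n].\<close>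
definition induced_measure ::
  "strategy \<Rightarrow> strategy \<Rightarrow> (forecast \<times> forecast \<Rightarrow> forecast) \<Rightarrow> (nat \<Rightarrow> outcome) measure \<Rightarrow> bool" where
  "induced_measure f g h M \<longleftrightarrow>
     prob_space M \<and> sets M = sets seq_space \<and> space M = space seq_space \<and>
     (\<forall>\<omega> t. measure M (cyl \<omega> t) =
        (\<Prod>n<t. pmf (h (f (play_hist \<omega> f g n), g (play_hist \<omega> f g n))) (\<omega> n)))"

text \<open>A test: T t (for t > 0) maps play paths to [0,1] and is G_t-measurable,
  i.e. depends only on the first t entries of the path.\<close>
type_synonym test = "nat \<Rightarrow> (nat \<Rightarrow> entry) \<Rightarrow> real"

definition is_test :: "test \<Rightarrow> bool" where
  "is_test T \<longleftrightarrow> (\<forall>t>0. (\<forall>x. 0 \<le> T t x \<and> T t x \<le> 1) \<and>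
      (\<forall>x y. (\<forall>n<t. x n = y n) \<longrightarrow> T t x = T t y))"

definition L_set :: "test \<Rightarrow> strategy \<Rightarrow> strategy \<Rightarrow> real \<Rightarrow> (nat \<Rightarrow> outcome) set" where
  "L_set T f g \<epsilon> = {\<omega>. \<exists>l. (\<lambda>t. T t (play_path \<omega> f g)) \<longlonglongrightarrow> l \<and> l > \<epsilon>}"

definition R_set :: "test \<Rightarrow> strategy \<Rightarrow> strategy \<Rightarrow> real \<Rightarrow> (nat \<Rightarrow> outcome) set" where
  "R_set T f g \<epsilon> = {\<omega>. \<exists>l. (\<lambda>t. T t (play_path \<omega> f g)) \<longlonglongrightarrow> l \<and> l < \<epsilon>}"

definition reasonable :: "test \<Rightarrow> bool" where
  "reasonable T \<longleftrightarrow> is_test T \<and>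
    (\<forall>f g Mf Mg. induced_measure f g fst Mf \<and> induced_measure f g snd Mg \<longrightarrow>
      (\<forall>A \<in> sets seq_space.
        (\<forall>\<epsilon>. 0 < \<epsilon> \<and> \<epsilon> < 1/2 \<and> measure Mg A > 0 \<and> measure Mf A < \<epsilon> / (1 - \<epsilon>) * measure Mg A
            \<longrightarrow> measure Mg (A \<inter> R_set T f g \<epsilon>) > 0) \<and>
        (\<forall>\<epsilon>. 1/2 < \<epsilon> \<and> \<epsilon> < 1 \<and> measure Mf A > 0 \<and> measure Mg A < (1 - \<epsilon>) / \<epsilon> * measure Mf A
            \<longrightarrow> measure Mf (A \<inter> L_set T f g \<epsilon>) > 0)))"

end

theory Submission
  imports Defs
begin

text \<open>The set B = A \<inter> R (resp. A \<inter> L) is disjoint from L (resp. R), since a limit is unique.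
  If B had positive f-measure but g-measure zero, then g(B) < (1-\<epsilon>)/\<epsilon> f(B) trivially, and
  reasonableness would give f(B \<inter> L) > 0 although B \<inter> L is empty; symmetrically for L.\<close>

lemma L_set_R_set_disjoint: "L_set T f g \<epsilon> \<inter> R_set T f g \<epsilon> = {}"
  unfolding L_set_def R_set_def using LIMSEQ_unique by fastforce

lemma reasonableD_R_set:
  assumes "reasonable T" "induced_measure f g fst Mf" "induced_measure f g snd Mg"
    and "A \<in> sets seq_space" "0 < \<epsilon>" "\<epsilon> < 1/2"
    and "measure Mg A > 0" "measure Mf A < \<epsilon> / (1 - \<epsilon>) * measure Mg A"
  shows "measure Mg (A \<inter> R_set T f g \<epsilon>) > 0"
  using assms unfolding reasonable_def by blast

lemma reasonableD_L_set:
  assumes "reasonable T" "induced_measure f g fst Mf" "induced_measure f g snd Mg"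
    and "A \<in> sets seq_space" "1/2 < \<epsilon>" "\<epsilon> < 1"
    and "measure Mf A > 0" "measure Mg A < (1 - \<epsilon>) / \<epsilon> * measure Mf A"
  shows "measure Mf (A \<inter> L_set T f g \<epsilon>) > 0"
  using assms unfolding reasonable_def by blast

lemma measure_pos_sets_seq_space:
  assumes "induced_measure f g h M" "measure M B > 0"
  shows "B \<in> sets seq_space"
  using assms measure_notin_sets[of B M] unfolding induced_measure_def by fastforce

lemma reasonable_R_set_abs_cont:
  assumes "reasonable T" "induced_measure f g fst Mf" "induced_measure f g snd Mg"
    and "1/2 < \<epsilon>" "\<epsilon> < 1" "measure Mf (A \<inter> R_set T f g \<epsilon>) > 0"
  shows "measure Mg (A \<inter> R_set T f g \<epsilon>) > 0"
proof (rule ccontr)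
  define B where "B = A \<inter> R_set T f g \<epsilon>"
  assume "\<not> measure Mg (A \<inter> R_set T f g \<epsilon>) > 0"
  then have "measure Mg B = 0"
    using measure_nonneg[of Mg B] unfolding B_def by linarith
  moreover have "(1 - \<epsilon>) / \<epsilon> * measure Mf B > 0"
    using assms(4-6) unfolding B_def by simp
  moreover have "B \<in> sets seq_space"
    using measure_pos_sets_seq_space assms(2,6) unfolding B_def by blast
  ultimately have "measure Mf (B \<inter> L_set T f g \<epsilon>) > 0"
    using reasonableD_L_set assms(1-6) unfolding B_def by auto
  moreover have "B \<inter> L_set T f g \<epsilon> = {}"
    using L_set_R_set_disjoint unfolding B_def by blast
  ultimately show False by simp
qed

lemma reasonable_L_set_abs_cont:
  assumes "reasonable T" "induced_measure f g fst Mf" "induced_measure f g snd Mg"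
    and "0 < \<epsilon>" "\<epsilon> < 1/2" "measure Mg (A \<inter> L_set T f g \<epsilon>) > 0"
  shows "measure Mf (A \<inter> L_set T f g \<epsilon>) > 0"
proof (rule ccontr)
  define B where "B = A \<inter> L_set T f g \<epsilon>"
  assume "\<not> measure Mf (A \<inter> L_set T f g \<epsilon>) > 0"
  then have "measure Mf B = 0"
    using measure_nonneg[of Mf B] unfolding B_def by linarith
  moreover have "\<epsilon> / (1 - \<epsilon>) * measure Mg B > 0"
    using assms(4-6) unfolding B_def by simp
  moreover have "B \<in> sets seq_space"
    using measure_pos_sets_seq_space assms(3,6) unfolding B_def by blast
  ultimately have "measure Mg (B \<inter> R_set T f g \<epsilon>) > 0"
    using reasonableD_R_set assms(1-6) unfolding B_def by auto
  moreover have "B \<inter> R_set T f g \<epsilon> = {}"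
    using L_set_R_set_disjoint unfolding B_def by blast
  ultimately show False by simp
qed

theorem mainTheorem14:
  fixes T :: test and f g :: strategy and Mf Mg :: "(nat \<Rightarrow> outcome) measure"
    and A :: "(nat \<Rightarrow> outcome) set"
  assumes "reasonable T"
    and "induced_measure f g fst Mf" and "induced_measure f g snd Mg"
    and "A \<in> sets seq_space"
  shows "(\<forall>\<epsilon>. 1/2 < \<epsilon> \<and> \<epsilon> < 1 \<and> measure Mf (A \<inter> R_set T f g \<epsilon>) > 0
            \<longrightarrow> measure Mg (A \<inter> R_set T f g \<epsilon>) > 0) \<and>
         (\<forall>\<epsilon>. 0 < \<epsilon> \<and> \<epsilon> < 1/2 \<and> measure Mg (A \<inter> L_set T f g \<epsilon>) > 0
            \<longrightarrow> measure Mf (A \<inter> L_set T f g \<epsilon>) > 0)"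
  using reasonable_R_set_abs_cont[OF assms(1-3)] reasonable_L_set_abs_cont[OF assms(1-3)]
  by blast

end
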